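(* Let $p$ be a prime and $m$ a positive integer with $m+2\le p$. Let $B$ be a finite left brace with $$(B,+)\cong \mathbb{Z}/(p^{\alpha_1})\times\cdots\times\mathbb{Z}/(p^{\alpha_m})$$ for integers $1\le\alpha_1\le\alpha_2\le\cdots\le\alpha_m$. Then $o_{\cdot}(x)=o_{+}(x)$ for every $x\in B$. Moreover, if $(B,\cdot)$ is abelian, then $(B,\cdot)\cong(B,+)$. In particular, if $|B|=p^n$ (and $(B,+)$ is any abelian group of that order) with $n+2\le p$, then $o_{\cdot}(x)=o_{+}(x)$ for every $x\in B$.
   Context: A left brace is a set $B$ with two binary operations $+$ and $\cdot$ such that $(B,+)$ is an abelian group, $(B,\cdot)$ is a group, and $a\cdot(b+c)+a=a\cdot b+a\cdot c$ for all $a,b,c\in B$. For $x\in B$, $o_{\cdot}(x)$ denotes the order of $x$ in the group $(B,\cdot)$ and $o_{+}(x)$ denotes the order of $x$ in the group $(B,+)$. *)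

theory Defs
  imports "HOL-Algebra.Algebra" "HOL-Computational_Algebra.Primes"
begin

definition left_brace :: "'a monoid \<Rightarrow> 'a monoid \<Rightarrow> bool" where
  "left_brace A M \<longleftrightarrow> comm_group A \<and> group M \<and> carrier M = carrier A \<and>
     (\<forall>a\<in>carrier A. \<forall>b\<in>carrier A. \<forall>c\<in>carrier A.
        (a \<otimes>\<^bsub>M\<^esub> (b \<otimes>\<^bsub>A\<^esub> c)) \<otimes>\<^bsub>A\<^esub> a
          = (a \<otimes>\<^bsub>M\<^esub> b) \<otimes>\<^bsub>A\<^esub> (a \<otimes>\<^bsub>M\<^esub> c))"

end

theory Submission
  imports Defs
begin

(*
  For a in a left brace, lambda a b = -a + ab is an automorphism of the additive group,
  lambda a o lambda b = lambda (ab), and the multiplicative power a^n is the orbit sum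
  a + lambda a a + ... + (lambda a)^(n-1) a.  Writing lambda a = 1 + delta, this sum equals
  SUM j. (n choose j+1) delta^j a.  As lambda a has p-power order, delta is nilpotent on the
  p-torsion, where the kernels of its powers grow by factors of p; having at most p^(p-2)
  elements of order dividing p forces delta^(p-2) = 0 there.  Hence the p-th orbit sum vanishes
  exactly on the p-torsion, and induction on k shows that a^(p^k) = 1 holds multiplicatively iff
  it holds additively, so the two orders agree.  If the multiplicative group is abelian it thus
  has the same torsion counts as the additive group, and finite abelian p-groups with equal
  torsion counts are isomorphic.
*)

section \<open>Torsion subgroups\<close>

definition torsion :: "('a, 'b) monoid_scheme \<Rightarrow> nat \<Rightarrow> 'a set" where
  "torsion G n = {x \<in> carrier G. x [^]\<^bsub>G\<^esub> n = \<one>\<^bsub>G\<^esub>}"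

lemma torsion_subset: "torsion G n \<subseteq> carrier G"
  by (auto simp: torsion_def)

lemma torsion_eq_carrier_iff:
  "finite (carrier G) \<Longrightarrow> torsion G n = carrier G \<longleftrightarrow> card (torsion G n) = order G"
  unfolding order_def using card_subset_eq torsion_subset by metis

lemma (in comm_group) subgroup_torsion: "subgroup (torsion G n) G"
  by (rule subgroupI) (auto simp: torsion_def nat_pow_distrib nat_pow_inv)

lemma (in group) card_torsion_pos: "finite (carrier G) \<Longrightarrow> 0 < card (torsion G n)"
  using finite_subset[OF torsion_subset] by (auto simp: card_gt_0_iff torsion_def)

lemma card_torsion_iso:
  assumes "h \<in> iso G H" "group G" "group H"
  shows "card (torsion G n) = card (torsion H n)"
proof -
  interpret group_hom G H h
    using assms by (simp add: group_hom_def group_hom_axioms_def iso_def)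
  have bij: "bij_betw h (carrier G) (carrier H)"
    using assms by (simp add: iso_def)
  then have inj: "inj_on h (carrier G)"
    by (rule bij_betw_imp_inj_on)
  have "x [^]\<^bsub>G\<^esub> n = \<one>\<^bsub>G\<^esub> \<longleftrightarrow> h x [^]\<^bsub>H\<^esub> n = \<one>\<^bsub>H\<^esub>" if "x \<in> carrier G" for x
    using that inj_onD[OF inj] by (metis G.nat_pow_closed G.one_closed hom_nat_pow hom_one)
  moreover have "carrier H = h ` carrier G"
    using bij by (simp add: bij_betw_def)
  ultimately have "h ` torsion G n = torsion H n"
    unfolding torsion_def by auto
  moreover have "inj_on h (torsion G n)"
    using inj by (rule inj_on_subset) (auto simp: torsion_def)
  ultimately show ?thesis
    by (metis card_image)
qed

lemma card_torsion_is_iso: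
  "G \<cong> H \<Longrightarrow> group G \<Longrightarrow> group H \<Longrightarrow> card (torsion G n) = card (torsion H n)"
  unfolding is_iso_def using card_torsion_iso by blast

lemma torsion_DirProd: "torsion (G \<times>\<times> H) n = torsion G n \<times> torsion H n"
proof -
  have "(x, y) [^]\<^bsub>G \<times>\<times> H\<^esub> (n::nat) = (x [^]\<^bsub>G\<^esub> n, y [^]\<^bsub>H\<^esub> n)" for x y
    by (induct n) auto
  then show ?thesis
    by (auto simp: torsion_def)
qed

lemma nat_pow_product_group:
  "f \<in> carrier (product_group I G) \<Longrightarrow>
    f [^]\<^bsub>product_group I G\<^esub> (n::nat) = (\<lambda>i\<in>I. f i [^]\<^bsub>G i\<^esub> n)"
  by (induct n arbitrary: f) (auto simp: fun_eq_iff PiE_iff)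

lemma torsion_product_group: "torsion (product_group I G) n = (\<Pi>\<^sub>E i\<in>I. torsion (G i) n)"
proof (intro equalityI subsetI)
  fix f assume "f \<in> torsion (product_group I G) n"
  then show "f \<in> (\<Pi>\<^sub>E i\<in>I. torsion (G i) n)"
    by (auto simp: torsion_def nat_pow_product_group fun_eq_iff PiE_iff split: if_splits)
next
  fix f assume "f \<in> (\<Pi>\<^sub>E i\<in>I. torsion (G i) n)"
  then show "f \<in> torsion (product_group I G) n"
    by (auto simp: torsion_def nat_pow_product_group PiE_iff)
qed

lemma card_torsion_integer_mod_group:
  assumes "d dvd n" "n > 0"
  shows "card (torsion (integer_mod_group n) d) = d"
proof -
  obtain e where n: "n = d * e"
    using assms(1) by blast
  have "torsion (integer_mod_group n) d = (\<lambda>t. int e * t) ` {0..<int d}"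
  proof (intro equalityI subsetI)
    fix x assume "x \<in> torsion (integer_mod_group n) d"
    then have "0 \<le> x" "x < int d * int e" "int d * int e dvd int d * x"
      using assms by (auto simp: torsion_def carrier_integer_mod_group n dvd_eq_mod_eq_0)
    then show "x \<in> (\<lambda>t. int e * t) ` {0..<int d}"
      using n assms(2) by (auto elim!: dvdE simp: image_iff zero_le_mult_iff)
  next
    fix x assume "x \<in> (\<lambda>t. int e * t) ` {0..<int d}"
    then show "x \<in> torsion (integer_mod_group n) d"
      using assms(2) by (auto simp: torsion_def carrier_integer_mod_group n)
  qed
  moreover have "inj_on (\<lambda>t. int e * t) {0..<int d}"
    using assms(2) n by (auto simp: inj_on_def)
  ultimately show ?thesis
    by (simp add: card_image)
qed

lemma order_product_integer_mod_group:
  fixes p :: nat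
  assumes "finite I" "0 < p"
  shows "order (product_group I (\<lambda>i. integer_mod_group (p ^ \<alpha> i))) = p ^ (\<Sum>i\<in>I. \<alpha> i)"
  using assms by (simp add: order_def card_PiE carrier_integer_mod_group power_sum
      flip: of_nat_power)

lemma card_torsion_product_integer_mod_group:
  fixes p :: nat
  assumes "finite I" "0 < p" "\<And>i. i \<in> I \<Longrightarrow> 1 \<le> \<alpha> i"
  shows "card (torsion (product_group I (\<lambda>i. integer_mod_group (p ^ \<alpha> i))) p) = p ^ card I"
proof -
  have "p dvd p ^ \<alpha> i" if "i \<in> I" for i
    using assms(3)[OF that] by (simp add: dvd_power)
  then show ?thesis
    using assms by (simp add: torsion_product_group card_PiE card_torsion_integer_mod_group)
qed

section \<open>Finite abelian \<open>p\<close>-groups\<close>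

context group
begin

lemma nat_pow_mod_ord: "x \<in> carrier G \<Longrightarrow> x [^] (k mod ord x) = x [^] (k::nat)"
  by (metis mod_mult_div_eq mult.commute nat_pow_mult nat_pow_one nat_pow_pow pow_ord_eq_1 r_one
      nat_pow_closed)

lemma cyclic_subgroup_iso_integer_mod_group:
  assumes x: "x \<in> carrier G" and n: "ord x = n" "n > 0"
  shows "(\<lambda>i. x [^] nat i) \<in> iso (integer_mod_group n) (subgroup_generated G {x})"
proof (rule isoI)
  have carrier: "carrier (subgroup_generated G {x}) = range (\<lambda>k::nat. x [^] k)"
    using x n generate_pow_nat[of x] by (auto simp: carrier_subgroup_generated)
  show "(\<lambda>i. x [^] nat i) \<in> hom (integer_mod_group n) (subgroup_generated G {x})"
  proof (rule homI)
    fix i j assume "i \<in> carrier (integer_mod_group n)" "j \<in> carrier (integer_mod_group n)"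
    then have "nat ((i + j) mod int n) = (nat i + nat j) mod n"
      using n by (simp add: carrier_integer_mod_group nat_mod_distrib nat_add_distrib split: if_splits)
    then show "x [^] nat (i \<otimes>\<^bsub>integer_mod_group n\<^esub> j)
        = x [^] nat i \<otimes>\<^bsub>subgroup_generated G {x}\<^esub> x [^] nat j"
      using x n nat_pow_mod_ord[OF x, of "nat i + nat j"] by (simp add: nat_pow_mult)
  qed (simp add: carrier)
  have "range (\<lambda>k::nat. x [^] k) = (\<lambda>k. x [^] k) ` {0..<n}"
  proof (intro equalityI subsetI)
    fix y assume "y \<in> range (\<lambda>k::nat. x [^] k)"
    then obtain k :: nat where "y = x [^] k"
      by blast
    then have "y = x [^] (k mod n)" "k mod n \<in> {0..<n}"
      using n nat_pow_mod_ord[OF x, of k] by auto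
    then show "y \<in> (\<lambda>k. x [^] k) ` {0..<n}"
      by blast
  qed auto
  moreover have "inj_on (\<lambda>k::nat. x [^] k) {0..<n}"
    using ord_inj[OF x] n by (simp add: atLeastLessThanSuc_atLeastAtMost[symmetric])
  ultimately have "bij_betw (\<lambda>k::nat. x [^] k) {0..<n} (range (\<lambda>k::nat. x [^] k))"
    by (simp add: bij_betw_def)
  moreover have "bij_betw nat {0..<int n} {0..<n}"
  proof (rule bij_betw_imageI)
    show "inj_on nat {0..<int n}"
      by (auto simp: inj_on_def)
    show "nat ` {0..<int n} = {0..<n}"
      by (auto simp: image_iff intro!: bexI[where x = "int _"])
  qed
  ultimately have "bij_betw (\<lambda>i. x [^] nat i) {0..<int n} (range (\<lambda>k::nat. x [^] k))"
    using bij_betw_trans by (fastforce simp: comp_def)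
  then show "bij_betw (\<lambda>i. x [^] nat i) (carrier (integer_mod_group n))
      (carrier (subgroup_generated G {x}))"
    using n by (simp add: carrier carrier_integer_mod_group)
qed

end


lemma (in group) subgroup_nat_pow_closed: "subgroup H G \<Longrightarrow> x \<in> H \<Longrightarrow> x [^] (n::nat) \<in> H"
  using subgroup_int_pow_closed[of H x "int n"] by (simp add: int_pow_int)

lemma (in group) coprime_pows_in_subgroup:
  assumes "subgroup H G" "y \<in> carrier G" "y [^] m \<in> H" "y [^] n \<in> H" "coprime m (n::nat)"
  shows "y \<in> H"
proof -
  obtain u v :: int where uv: "u * int m + v * int n = 1"
    using bezout_int[of "int m" "int n"] assms(5) by (auto simp: coprime_iff_gcd_eq_1)
  have "y = y [^] (u * int m + v * int n)"
    using assms(2) by (simp add: uv)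
  also have "\<dots> = (y [^] int m) [^] u \<otimes> (y [^] int n) [^] v"
    using assms(2) by (simp add: int_pow_mult int_pow_pow mult.commute)
  finally show ?thesis
    using assms by (metis int_pow_int subgroup.m_closed subgroup_int_pow_closed)
qed

lemma (in group) ex_not_in_subgroup_pow_in:
  assumes "subgroup H G" "x \<in> carrier G" "x \<notin> H" "x [^] ((p::nat) ^ a) \<in> H"
  obtains y where "y \<in> carrier G" "y \<notin> H" "y [^] p \<in> H"
proof -
  define j where "j = (LEAST j. x [^] (p ^ j) \<in> H)"
  have j: "x [^] (p ^ j) \<in> H"
    unfolding j_def using assms(4) by (rule LeastI)
  then have "j \<noteq> 0"
    using assms(2,3) by (intro notI) simp
  then have "x [^] (p ^ (j - 1)) \<notin> H"
    using not_less_Least[of "j - 1" "\<lambda>j. x [^] (p ^ j) \<in> H"] by (simp add: j_def)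
  moreover have "(x [^] (p ^ (j - 1))) [^] p = x [^] (p ^ j)"
    using \<open>j \<noteq> 0\<close> assms(2) by (cases j) (simp_all add: nat_pow_pow mult.commute)
  ultimately show ?thesis
    using that[of "x [^] (p ^ (j - 1))"] assms(2) j by simp
qed

context comm_group
begin

lemma subgroup_set_mult: "subgroup H G \<Longrightarrow> subgroup K G \<Longrightarrow> subgroup (H <#> K) G"
  by (simp add: mult_norm_subgroup subgroup_imp_normal)

lemma set_mult_memI: "x \<in> H \<Longrightarrow> y \<in> K \<Longrightarrow> x \<otimes> y \<in> H <#> K"
  by (auto simp: set_mult_def)

lemma subgroup_subset_set_mult:
  assumes "subgroup H G" "subgroup K G"
  shows "H \<subseteq> H <#> K" "K \<subseteq> H <#> K"
proof -
  show "H \<subseteq> H <#> K"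
  proof
    fix x assume "x \<in> H"
    then show "x \<in> H <#> K"
      using set_mult_memI[of x H "\<one>" K] assms by (simp add: subgroup.one_closed subgroup.mem_carrier)
  qed
  show "K \<subseteq> H <#> K"
  proof
    fix x assume "x \<in> K"
    then show "x \<in> H <#> K"
      using set_mult_memI[of "\<one>" H x K] assms by (simp add: subgroup.one_closed subgroup.mem_carrier)
  qed
qed

lemma generate_singleton_eq_range:
  "x \<in> carrier G \<Longrightarrow> ord x \<noteq> 0 \<Longrightarrow> generate G {x} = range (\<lambda>n::nat. x [^] n)"
  using generate_pow_nat by auto

lemma subgroup_generate_singleton: "x \<in> carrier G \<Longrightarrow> subgroup (generate G {x}) G"
  by (simp add: generate_is_subgroup)

lemma disjoint_set_mult_generate:
  fixes p :: nat
  assumes p: "Factorial_Ring.prime p" and C: "subgroup C G" and K: "subgroup K G" "C \<inter> K \<subseteq> {\<one>}"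
    and y: "y \<in> carrier G" "ord y \<noteq> 0" "y \<notin> C <#> K" "y [^] p \<in> K"
  shows "C \<inter> (K <#> generate G {y}) \<subseteq> {\<one>}"
proof
  fix z assume z: "z \<in> C \<inter> (K <#> generate G {y})"
  then obtain k i where k: "k \<in> K" and zki: "z = k \<otimes> y [^] (i::nat)"
    using y generate_singleton_eq_range by (auto simp: set_mult_def)
  have kG: "k \<in> carrier G"
    using K(1) k by (rule subgroup.mem_carrier)
  have H: "subgroup (C <#> K) G" "C \<subseteq> C <#> K" "K \<subseteq> C <#> K"
    using C K subgroup_set_mult subgroup_subset_set_mult by auto
  have "y [^] i = z \<otimes> inv k"
    using zki kG y(1) by (simp add: m_comm[of k "y [^] i"] m_assoc)
  moreover have "z \<in> C <#> K" "k \<in> C <#> K"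
    using z k H(2,3) by auto
  ultimately have yi: "y [^] i \<in> C <#> K"
    using H(1) by (simp add: subgroup.m_closed subgroup.m_inv_closed)
  have "p dvd i"
  proof (rule ccontr)
    assume "\<not> p dvd i"
    then have "coprime i p"
      using p prime_imp_coprime[of p i] by (simp add: coprime_commute)
    moreover have "y [^] p \<in> C <#> K"
      using y(4) H(3) by blast
    ultimately have "y \<in> C <#> K"
      using coprime_pows_in_subgroup[OF H(1) y(1) yi] by blast
    then show False
      using y(3) by blast
  qed
  then obtain q where "i = p * q"
    by blast
  then have "z \<in> K"
    using zki K(1) k subgroup_nat_pow_closed[OF K(1) y(4), of q] nat_pow_pow[OF y(1), of p q]
    by (simp add: subgroup.m_closed)
  then show "z \<in> {\<one>}"
    using z K(2) by blast
qed

lemma prime_dvd_exponent_of_generator: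
  fixes p :: nat
  assumes p: "Factorial_Ring.prime p"
    and g: "g \<in> carrier G" "ord g = p ^ Suc b"
    and exp: "\<And>x. x \<in> carrier G \<Longrightarrow> x [^] (p ^ Suc b) = \<one>"
    and K: "subgroup K G" "generate G {g} \<inter> K \<subseteq> {\<one>}"
    and x: "x \<in> carrier G" "x [^] p = g [^] s \<otimes> k" "k \<in> K"
  shows "p dvd s"
proof -
  have kG: "k \<in> carrier G"
    using K(1) x(3) by (rule subgroup.mem_carrier)
  have "g [^] (s * p ^ b) \<otimes> k [^] (p ^ b) = (x [^] p) [^] (p ^ b)"
    using x(2) g kG by (simp add: nat_pow_distrib nat_pow_pow)
  also have "\<dots> = \<one>"
    using exp[OF x(1)] x(1) by (simp add: nat_pow_pow)
  finally have "g [^] (s * p ^ b) = inv (k [^] (p ^ b))"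
    using g kG by (simp add: inv_equality)
  moreover have "inv (k [^] (p ^ b)) \<in> K"
    using K(1) x(3) by (simp add: subgroup.m_inv_closed subgroup_nat_pow_closed)
  moreover have "g [^] (s * p ^ b) \<in> generate G {g}"
    using generate_singleton_eq_range[OF g(1)] g(2) p by (simp add: prime_gt_0_nat)
  ultimately have "g [^] (s * p ^ b) = \<one>"
    using K(2) by auto
  then have "p ^ b * p dvd p ^ b * s"
    using g by (simp add: pow_eq_id mult.commute)
  then show ?thesis
    using p by (simp add: prime_gt_0_nat)
qed

lemma ex_not_in_set_mult_pow_in:
  fixes p :: nat
  assumes p: "Factorial_Ring.prime p"
    and g: "g \<in> carrier G" "ord g = p ^ Suc b"
    and exp: "\<And>x. x \<in> carrier G \<Longrightarrow> x [^] (p ^ Suc b) = \<one>"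
    and K: "subgroup K G" "generate G {g} \<inter> K \<subseteq> {\<one>}"
    and x: "x \<in> carrier G" "x \<notin> generate G {g} <#> K"
  obtains y where "y \<in> carrier G" "y \<notin> generate G {g} <#> K" "y [^] p \<in> K"
proof -
  define C where "C = generate G {g}"
  have "ord g \<noteq> 0"
    using g p by (simp add: prime_gt_0_nat)
  then have C_range: "C = range (\<lambda>n::nat. g [^] n)"
    unfolding C_def by (rule generate_singleton_eq_range[OF g(1)])
  have H: "subgroup (C <#> K) G" "C \<subseteq> C <#> K"
    using g(1) K(1) subgroup_set_mult subgroup_subset_set_mult subgroup_generate_singleton
    by (auto simp: C_def)
  have "x [^] (p ^ Suc b) \<in> C <#> K"
    using exp[OF x(1)] H(1) by (simp add: subgroup.one_closed)
  moreover have "x \<notin> C <#> K"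
    using x(2) by (simp add: C_def)
  ultimately obtain x' where x': "x' \<in> carrier G" "x' \<notin> C <#> K" "x' [^] p \<in> C <#> K"
    using ex_not_in_subgroup_pow_in[OF H(1) x(1)] by blast
  then obtain s k where k: "k \<in> K" and xp: "x' [^] p = g [^] (s::nat) \<otimes> k"
    using C_range by (auto simp: set_mult_def)
  obtain t where s: "s = p * t"
    using prime_dvd_exponent_of_generator[OF p g exp K x'(1) xp k] by blast
  define y where "y = x' \<otimes> inv (g [^] t)"
  have yG: "y \<in> carrier G"
    using x'(1) g by (simp add: y_def)
  have "y \<notin> C <#> K"
  proof
    assume "y \<in> C <#> K"
    moreover have "g [^] t \<in> C <#> K"
      using C_range H(2) by blast
    ultimately have "y \<otimes> g [^] t \<in> C <#> K"
      using H(1) by (simp add: subgroup.m_closed)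
    then show False
      using x' g by (simp add: y_def m_assoc)
  qed
  moreover have "y [^] p = k"
  proof -
    have kG: "k \<in> carrier G"
      using K(1) k by (rule subgroup.mem_carrier)
    have "y [^] p = g [^] s \<otimes> k \<otimes> inv (g [^] s)"
      using x'(1) g xp by (simp add: y_def nat_pow_distrib nat_pow_inv nat_pow_pow s mult.commute)
    then show ?thesis
      using g kG by (simp add: m_comm[of "g [^] s" k] m_assoc)
  qed
  ultimately show ?thesis
    using that yG k by (simp add: C_def)
qed

lemma larger_complement:
  fixes p :: nat
  assumes p: "Factorial_Ring.prime p"
    and g: "g \<in> carrier G" "ord g = p ^ Suc b"
    and exp: "\<And>x. x \<in> carrier G \<Longrightarrow> x [^] (p ^ Suc b) = \<one>"
    and K: "subgroup K G" "generate G {g} \<inter> K \<subseteq> {\<one>}"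
    and not_all: "generate G {g} <#> K \<noteq> carrier G"
  obtains K' where "subgroup K' G" "generate G {g} \<inter> K' \<subseteq> {\<one>}" "K \<subset> K'"
proof -
  have C: "subgroup (generate G {g}) G"
    using g(1) by (rule subgroup_generate_singleton)
  have "generate G {g} <#> K \<subseteq> carrier G"
    using subgroup_set_mult[OF C K(1)] by (rule subgroup.subset)
  then obtain x where "x \<in> carrier G" "x \<notin> generate G {g} <#> K"
    using not_all by blast
  then obtain y where y: "y \<in> carrier G" "y \<notin> generate G {g} <#> K" "y [^] p \<in> K"
    using ex_not_in_set_mult_pow_in[OF p g exp K] by blast
  have Y: "subgroup (generate G {y}) G"
    using y(1) by (rule subgroup_generate_singleton)
  have "ord y \<noteq> 0"
    using y(1) exp[OF y(1)] p by (auto simp: ord_eq_0 prime_gt_0_nat intro!: exI[of _ "p ^ Suc b"])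
  then have "generate G {g} \<inter> (K <#> generate G {y}) \<subseteq> {\<one>}"
    using disjoint_set_mult_generate[OF p C K] y by blast
  moreover have "K \<subseteq> K <#> generate G {y}" "y \<in> K <#> generate G {y}"
    using subgroup_subset_set_mult[OF K(1) Y] by (auto intro: generate.incl)
  moreover have "y \<notin> K"
    using y(2) subgroup_subset_set_mult[OF C K(1)] by blast
  ultimately show ?thesis
    using that subgroup_set_mult[OF K(1) Y] by blast
qed

lemma cyclic_subgroup_complement:
  fixes p :: nat
  assumes fin: "finite (carrier G)" and p: "Factorial_Ring.prime p"
    and g: "g \<in> carrier G" "ord g = p ^ Suc b"
    and exp: "\<And>x. x \<in> carrier G \<Longrightarrow> x [^] (p ^ Suc b) = \<one>"
  obtains K where "subgroup K G" "generate G {g} \<inter> K \<subseteq> {\<one>}" "generate G {g} <#> K = carrier G"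
proof -
  define S where "S = {K. subgroup K G \<and> generate G {g} \<inter> K \<subseteq> {\<one>}}"
  have "S \<subseteq> Pow (carrier G)"
    by (auto simp: S_def dest: subgroup.mem_carrier)
  then have "finite S"
    using fin by (simp add: finite_subset)
  moreover have "{\<one>} \<in> S"
    by (simp add: S_def triv_subgroup)
  ultimately obtain K where K: "K \<in> S" and maximal: "\<And>K'. K' \<in> S \<Longrightarrow> K \<subseteq> K' \<Longrightarrow> K = K'"
    using finite_has_maximal[of S] by blast
  then have sub: "subgroup K G" "generate G {g} \<inter> K \<subseteq> {\<one>}"
    by (auto simp: S_def)
  have "generate G {g} <#> K = carrier G"
  proof (rule ccontr)
    assume "generate G {g} <#> K \<noteq> carrier G"
    then obtain K' where "subgroup K' G" "generate G {g} \<inter> K' \<subseteq> {\<one>}" "K \<subset> K'"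
      using larger_complement[OF p g exp sub] by blast
    then have "K' \<in> S" "K \<subset> K'"
      by (simp_all add: S_def)
    then show False
      using maximal by blast
  qed
  then show ?thesis
    using that sub by blast
qed

lemma subgroup_generated_generate:
  "A \<subseteq> carrier G \<Longrightarrow> subgroup_generated G (generate G A) = subgroup_generated G A"
  unfolding subgroup_generated_def
  by (simp add: Int_absorb1 generate_in_carrier subset_antisym generate_subgroup_incl
      generate_is_subgroup generate.incl subsetI)

lemma cyclic_direct_factor:
  fixes p :: nat
  assumes fin: "finite (carrier G)" and p: "Factorial_Ring.prime p"
    and g: "g \<in> carrier G" "ord g = p ^ Suc b"
    and exp: "\<And>x. x \<in> carrier G \<Longrightarrow> x [^] (p ^ Suc b) = \<one>"
  obtains K where "subgroup K G" "G \<cong> integer_mod_group (p ^ Suc b) \<times>\<times> subgroup_generated G K"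
proof -
  obtain K where K: "subgroup K G" "generate G {g} \<inter> K \<subseteq> {\<one>}" "generate G {g} <#> K = carrier G"
    using cyclic_subgroup_complement[OF fin p g exp] by blast
  interpret group_disjoint_sum G "generate G {g}" K
    using K(1) g(1) by (simp add: group_disjoint_sum_def is_group subgroup_generate_singleton)
  have "(\<lambda>(x, y). x \<otimes> y) \<in> iso (subgroup_generated G {g} \<times>\<times> subgroup_generated G K) G"
    using iso_group_mul[OF comm_group_axioms] K g(1) by (simp add: subgroup_generated_generate)
  then have "G \<cong> subgroup_generated G {g} \<times>\<times> subgroup_generated G K"
    by (simp add: DirProd_group group.iso_sym is_isoI)
  also have "subgroup_generated G {g} \<times>\<times> subgroup_generated G K
      \<cong> integer_mod_group (p ^ Suc b) \<times>\<times> subgroup_generated G K"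
  proof (rule group.DirProd_iso_trans)
    have "integer_mod_group (p ^ Suc b) \<cong> subgroup_generated G {g}"
      using cyclic_subgroup_iso_integer_mod_group[OF g] p by (simp add: is_isoI prime_gt_0_nat)
    then show "subgroup_generated G {g} \<cong> integer_mod_group (p ^ Suc b)"
      by (simp add: group.iso_sym)
  qed simp_all
  finally show ?thesis
    using that K(1) by blast
qed

end

lemma (in group) ex_ord_eq_prime_power:
  fixes p :: nat
  assumes p: "Factorial_Ring.prime p"
    and "torsion G (p ^ Suc b) = carrier G" "torsion G (p ^ b) \<noteq> carrier G"
  obtains g where "g \<in> carrier G" "ord g = p ^ Suc b"
proof -
  obtain g where g: "g \<in> carrier G" "g [^] (p ^ b) \<noteq> \<one>"
    using assms(3) torsion_subset[of G "p ^ b"] by (auto simp: torsion_def)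
  have "g [^] (p ^ Suc b) = \<one>"
    using assms(2) g(1) by (auto simp: torsion_def)
  then have "ord g dvd p ^ Suc b"
    using g(1) by (simp add: pow_eq_id)
  then obtain i where i: "i \<le> Suc b" "ord g = p ^ i"
    using divides_primepow_nat[OF p] by blast
  have "i = Suc b"
  proof (rule ccontr)
    assume "i \<noteq> Suc b"
    then have "ord g dvd p ^ b"
      using i by (simp add: le_imp_power_dvd)
    then show False
      using g by (simp add: pow_eq_id)
  qed
  then show ?thesis
    using that g(1) i(2) by blast
qed

lemma iso_if_order_one:
  assumes "group G" "group H" "order G = 1" "order H = 1"
  shows "G \<cong> H"
proof -
  have "carrier G = {\<one>\<^bsub>G\<^esub>}" "carrier H = {\<one>\<^bsub>H\<^esub>}"
    using assms by (metis card_1_singletonE group.is_monoid monoid.one_closed order_def singletonD)+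
  then have "(\<lambda>_. \<one>\<^bsub>H\<^esub>) \<in> iso G H"
    using assms(2) by (auto simp: iso_def hom_def bij_betw_def group.is_monoid)
  then show ?thesis
    by (rule is_isoI)
qed

lemma card_torsion_DirProd:
  "card (torsion (G \<times>\<times> H) n) = card (torsion G n) * card (torsion H n)"
  by (simp add: torsion_DirProd card_cartesian_product)

lemma order_DirProd: "order (G \<times>\<times> H) = order G * order H"
  by (simp add: order_def card_cartesian_product)

lemma order_integer_mod_group: "n > 0 \<Longrightarrow> order (integer_mod_group n) = n"
  by (simp add: order_def carrier_integer_mod_group)

definition torsion_exponent :: "('a, 'b) monoid_scheme \<Rightarrow> nat \<Rightarrow> nat" where
  "torsion_exponent G p = (LEAST e. torsion G (p ^ e) = carrier G)"

lemma torsion_exponent_eq: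
  assumes "finite (carrier G)" "finite (carrier H)" "order G = order H"
    and "\<And>k. card (torsion G k) = card (torsion H k)"
  shows "torsion_exponent G p = torsion_exponent H p"
  using assms by (simp add: torsion_exponent_def torsion_eq_carrier_iff)

lemma (in group) torsion_torsion_exponent:
  assumes "order G = p ^ n"
  shows "torsion G (p ^ torsion_exponent G p) = carrier G"
proof -
  have "torsion G (p ^ n) = carrier G"
    using pow_order_eq_1 by (auto simp: torsion_def simp flip: assms)
  then show ?thesis
    unfolding torsion_exponent_def by (rule LeastI)
qed

lemma (in group) torsion_exponent_pos:
  fixes p :: nat
  assumes p: "Factorial_Ring.prime p" and order: "order G = p ^ n" and "n \<noteq> 0"
  shows "0 < torsion_exponent G p"
proof (rule ccontr)
  assume "\<not> 0 < torsion_exponent G p"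
  then have eq: "torsion G 1 = carrier G"
    using torsion_torsion_exponent[OF order] by simp
  have "x = \<one>" if "x \<in> carrier G" for x
  proof -
    have "x \<in> torsion G 1"
      using that eq by simp
    then show ?thesis
      by (auto simp: torsion_def)
  qed
  then have "order G \<le> 1"
    unfolding order_def using card_mono[of "{\<one>}" "carrier G"] by force
  moreover have "1 < p ^ n"
    using one_less_power[OF prime_gt_1_nat[OF p]] assms(3) by blast
  ultimately show False
    using order by simp
qed

lemma (in comm_group) cyclic_factor_torsion_exponent:
  fixes p :: nat
  assumes p: "Factorial_Ring.prime p" and order: "order G = p ^ n" and "n \<noteq> 0"
  obtains K where "subgroup K G"
    "G \<cong> integer_mod_group (p ^ torsion_exponent G p) \<times>\<times> subgroup_generated G K"
proof -
  have fin: "finite (carrier G)"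
    using order prime_gt_0_nat[OF p] by (simp add: order_def card_ge_0_finite)
  obtain b where b: "torsion_exponent G p = Suc b"
    using torsion_exponent_pos[OF assms] not0_implies_Suc by blast
  have exp: "torsion G (p ^ Suc b) = carrier G"
    using torsion_torsion_exponent[OF order] b by simp
  have "torsion G (p ^ b) \<noteq> carrier G"
    using not_less_Least[of b "\<lambda>e. torsion G (p ^ e) = carrier G"] b
    by (simp add: torsion_exponent_def)
  then obtain g where "g \<in> carrier G" "ord g = p ^ Suc b"
    using ex_ord_eq_prime_power[OF p exp] by blast
  moreover have "x [^] (p ^ Suc b) = \<one>" if "x \<in> carrier G" for x
    using that exp by (auto simp: torsion_def)
  ultimately show ?thesis
    using cyclic_direct_factor[OF fin p] that b by metis
qed

lemma card_torsion_cancel_factor: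
  assumes "G \<cong> Z \<times>\<times> K" "H \<cong> Z \<times>\<times> K'" "group G" "group H" "group Z" "group K" "group K'"
    and "finite (carrier Z)" "card (torsion G n) = card (torsion H n)"
  shows "card (torsion K n) = card (torsion K' n)"
proof -
  have "card (torsion Z n) * card (torsion K n) = card (torsion Z n) * card (torsion K' n)"
    using assms by (simp add: card_torsion_is_iso DirProd_group card_torsion_DirProd)
  moreover have "0 < card (torsion Z n)"
    using assms(5,8) by (rule group.card_torsion_pos)
  ultimately show ?thesis
    by simp
qed

lemma order_cyclic_complement:
  fixes p :: nat
  assumes p: "Factorial_Ring.prime p" and iso: "G \<cong> integer_mod_group (p ^ a) \<times>\<times> K"
    and order: "order G = p ^ n" and "0 < a"
  shows "order K = p ^ (n - a)" "n - a < n"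
proof -
  have p1: "1 < p"
    using p prime_gt_1_nat by blast
  have pn: "p ^ a * order K = p ^ n"
    using iso_same_card[OF iso] order p1 by (simp add: order_def card_cartesian_product
        carrier_integer_mod_group flip: of_nat_power)
  then obtain i where i: "order K = p ^ i"
    using divides_primepow_nat[OF p] by (metis dvd_triv_right)
  then have "n = a + i"
    using pn p1 power_inject_exp[of p n "a + i"] by (simp add: power_add)
  then show "order K = p ^ (n - a)" "n - a < n"
    using i \<open>0 < a\<close> by simp_all
qed

text \<open>Split off a cyclic factor of maximal order from both groups and induct on the complements.\<close>

theorem iso_if_card_torsion_eq:
  fixes G :: "'a monoid" and H :: "'b monoid" and p :: nat
  assumes "comm_group G" "comm_group H" "Factorial_Ring.prime p"
    and "order G = p ^ n" "order H = p ^ n"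
    and "\<And>k. card (torsion G k) = card (torsion H k)"
  shows "G \<cong> H"
  using assms
proof (induction n arbitrary: G H rule: less_induct)
  case (less n)
  interpret G: comm_group G by (rule less.prems(1))
  interpret H: comm_group H by (rule less.prems(2))
  have p: "Factorial_Ring.prime p" "1 < p"
    using less.prems(3) prime_gt_1_nat by auto
  show ?case
  proof (cases "n = 0")
    case True
    then show ?thesis
      using less.prems by (simp add: iso_if_order_one G.is_group H.is_group)
  next
    case False
    have "finite (carrier G)" "finite (carrier H)"
      using less.prems(4,5) p(2) by (auto simp: order_def card_ge_0_finite)
    then have same_exponent: "torsion_exponent H p = torsion_exponent G p"
      using torsion_exponent_eq less.prems(4-6) by metis
    let ?Z = "integer_mod_group (p ^ torsion_exponent G p)"
    obtain K where K: "subgroup K G" "G \<cong> ?Z \<times>\<times> subgroup_generated G K"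
      using G.cyclic_factor_torsion_exponent[OF p(1) less.prems(4) False] .
    obtain K' where K': "subgroup K' H" "H \<cong> ?Z \<times>\<times> subgroup_generated H K'"
      using H.cyclic_factor_torsion_exponent[OF p(1) less.prems(5) False] same_exponent by metis
    let ?KG = "subgroup_generated G K" and ?KH = "subgroup_generated H K'"
    have exponent_pos: "0 < torsion_exponent G p"
      using G.torsion_exponent_pos[OF p(1) less.prems(4) False] .
    note KG = order_cyclic_complement[OF p(1) K(2) less.prems(4) exponent_pos]
    note KH = order_cyclic_complement[OF p(1) K'(2) less.prems(5) exponent_pos]
    have "card (torsion ?KG k) = card (torsion ?KH k)" for k
      using card_torsion_cancel_factor[OF K(2) K'(2)] less.prems(6) p(2)
      by (simp add: G.is_group H.is_group carrier_integer_mod_group)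
    then have "?KG \<cong> ?KH"
      using less.prems(1-3) KG(1) KH(1)
      by (intro less.IH[OF KG(2)])
        (simp_all add: G.abelian_subgroup_generated H.abelian_subgroup_generated)
    then have "?Z \<times>\<times> ?KG \<cong> ?Z \<times>\<times> ?KH"
      by (simp add: group.DirProd_iso_trans)
    also have "?Z \<times>\<times> ?KH \<cong> H"
      using K'(2) by (simp add: group.iso_sym DirProd_group)
    finally show ?thesis
      using K(2) iso_trans by blast
  qed
qed

section \<open>Endomorphisms of abelian groups\<close>

lemma (in group) funpow_hom: "f \<in> hom G G \<Longrightarrow> f ^^ n \<in> hom G G"
  by (induct n) (auto simp: hom_def Pi_iff)

lemma (in comm_group) hom_finprod:
  assumes "f \<in> hom G H" "comm_group H" "finite A" "g \<in> A \<rightarrow> carrier G"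
  shows "f (finprod G g A) = finprod H (\<lambda>i. f (g i)) A"
proof -
  interpret H: comm_group H by (rule assms(2))
  interpret group_hom G H f
    using assms(1) by (simp add: group_hom_def group_hom_axioms_def is_group H.is_group)
  show ?thesis
    using assms(3,4)
  proof (induction A rule: finite_induct)
    case (insert a A)
    then have "(\<lambda>i. f (g i)) \<in> insert a A \<rightarrow> carrier H"
      by (auto simp: Pi_iff)
    then show ?case
      using insert by auto
  qed simp
qed

locale abelian_endomorphism = comm_group G for G (structure) +
  fixes h :: "'a \<Rightarrow> 'a"
  assumes hom: "h \<in> hom G G"
begin

sublocale group_hom G G h
  by (simp add: group_hom_def group_hom_axioms_def is_group hom)

text \<open>In additive notation \<open>delta = h - id\<close>, so that \<open>h = id + delta\<close> with commuting summands.\<close>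

definition delta :: "'a \<Rightarrow> 'a" where
  "delta x = h x \<otimes> inv x"

lemma delta_hom: "delta \<in> hom G G"
  by (rule homI) (simp_all add: delta_def inv_mult m_ac)

lemma delta_closed [simp]: "x \<in> carrier G \<Longrightarrow> delta x \<in> carrier G"
  by (simp add: delta_def)

lemma delta_nat_pow: "x \<in> carrier G \<Longrightarrow> delta (x [^] (k::nat)) = delta x [^] k"
  using Group.hom_nat_pow[OF delta_hom _ is_group is_group] by simp

lemma group_hom_delta_pow: "group_hom G G (delta ^^ j)"
  using funpow_hom[OF delta_hom] by (simp add: group_hom_def group_hom_axioms_def is_group)

lemma delta_pow_closed [simp]: "x \<in> carrier G \<Longrightarrow> (delta ^^ j) x \<in> carrier G"
  using group_hom.hom_closed[OF group_hom_delta_pow] .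

lemma delta_pow_one [simp]: "(delta ^^ j) \<one> = \<one>"
  using group_hom.hom_one[OF group_hom_delta_pow] by simp

lemma delta_pow_nat_pow: "x \<in> carrier G \<Longrightarrow> (delta ^^ j) (x [^] (k::nat)) = (delta ^^ j) x [^] k"
  using group_hom.hom_nat_pow[OF group_hom_delta_pow] by simp

lemma delta_pow_finprod:
  "f \<in> A \<rightarrow> carrier G \<Longrightarrow> finite A \<Longrightarrow> (delta ^^ j) (finprod G f A) = (\<Otimes>i\<in>A. (delta ^^ j) (f i))"
  by (simp add: hom_finprod[OF funpow_hom[OF delta_hom] comm_group_axioms])

lemma h_eq_mult_delta: "x \<in> carrier G \<Longrightarrow> h x = x \<otimes> delta x"
  by (simp add: delta_def m_lcomm[of x "h x"])

lemma delta_finprod_pow: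
  fixes c :: "nat \<Rightarrow> nat"
  assumes "z \<in> carrier G"
  shows "delta (\<Otimes>j\<in>{..n}. (delta ^^ j) z [^] c j) = (\<Otimes>j\<in>{..n}. (delta ^^ Suc j) z [^] c j)"
proof -
  have "delta (\<Otimes>j\<in>{..n}. (delta ^^ j) z [^] c j) = (\<Otimes>j\<in>{..n}. delta ((delta ^^ j) z [^] c j))"
    using delta_pow_finprod[of "\<lambda>j. (delta ^^ j) z [^] c j" "{..n}" 1] assms by (simp add: Pi_iff)
  also have "\<dots> = (\<Otimes>j\<in>{..n}. (delta ^^ Suc j) z [^] c j)"
    using assms by (intro finprod_cong') (auto simp: delta_nat_pow)
  finally show ?thesis .
qed

lemma funpow_binomial:
  assumes z: "z \<in> carrier G"
  shows "(h ^^ n) z = (\<Otimes>j\<in>{..n}. (delta ^^ j) z [^] (n choose j))"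
proof (induction n)
  case 0
  then show ?case
    using z by simp
next
  case (Suc n)
  define g where "g j = (delta ^^ j) z [^] (n choose j)" for j
  have g: "g \<in> A \<rightarrow> carrier G" for A
    using z by (simp add: g_def)
  let ?D = "\<Otimes>j\<in>{..n}. (delta ^^ Suc j) z [^] (n choose j)"
  have D: "?D \<in> carrier G"
    using z by (simp add: Pi_iff)
  have "(\<Otimes>j\<in>{..Suc n}. (delta ^^ j) z [^] (Suc n choose j))
      = (\<Otimes>j\<in>{..n}. (delta ^^ Suc j) z [^] (n choose j) \<otimes> g (Suc j)) \<otimes> z"
    using z by (simp add: finprod_Suc2 Pi_iff g_def nat_pow_mult del: finprod_Suc)
  also have "\<dots> = ?D \<otimes> ((\<Otimes>j\<in>{..n}. g (Suc j)) \<otimes> g 0)"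
    using z g by (simp add: finprod_multf Pi_iff m_assoc g_def)
  also have "(\<Otimes>j\<in>{..n}. g (Suc j)) \<otimes> g 0 = finprod G g {..n}"
  proof -
    have "g (Suc n) = \<one>"
      by (simp add: g_def binomial_eq_0)
    then show ?thesis
      using finprod_Suc2[OF g, of n] finprod_Suc[OF g, of n] g[of "{..n}"] by simp
  qed
  also have "?D = delta (finprod G g {..n})"
    unfolding g_def by (rule delta_finprod_pow[OF z, symmetric])
  also have "delta (finprod G g {..n}) \<otimes> finprod G g {..n} = h (finprod G g {..n})"
    using g[of "{..n}"] by (simp add: h_eq_mult_delta m_comm)
  finally show ?case
    using Suc by (simp add: g_def[abs_def])
qed

primrec orbit_prod :: "nat \<Rightarrow> 'a \<Rightarrow> 'a" where
  "orbit_prod 0 z = \<one>"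
| "orbit_prod (Suc n) z = z \<otimes> h (orbit_prod n z)"

lemma orbit_prod_closed [simp]: "z \<in> carrier G \<Longrightarrow> orbit_prod n z \<in> carrier G"
  by (induct n) simp_all

lemma orbit_prod_nat_pow: "z \<in> carrier G \<Longrightarrow> orbit_prod n (z [^] (k::nat)) = orbit_prod n z [^] k"
  by (induct n) (simp_all add: hom_nat_pow nat_pow_distrib)

lemma orbit_prod_binomial:
  assumes z: "z \<in> carrier G"
  shows "orbit_prod n z = (\<Otimes>j\<in>{..n}. (delta ^^ j) z [^] (n choose Suc j))"
proof (induction n)
  case 0
  then show ?case
    using z by simp
next
  case (Suc n)
  define f where "f j = (delta ^^ j) z [^] (n choose Suc j)" for j
  define g where "g j = (delta ^^ j) z [^] (n choose j)" for j
  have fg: "f \<in> A \<rightarrow> carrier G" "g \<in> A \<rightarrow> carrier G" for A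
    using z by (simp_all add: f_def g_def)
  have "(\<Otimes>j\<in>{..Suc n}. (delta ^^ j) z [^] (Suc n choose Suc j))
      = (\<Otimes>j\<in>{..Suc n}. g j \<otimes> f j)"
    using z fg by (intro finprod_cong') (auto simp: f_def g_def nat_pow_mult)
  also have "\<dots> = finprod G g {..Suc n} \<otimes> finprod G f {..Suc n}"
    using fg by (simp add: finprod_multf)
  also have "finprod G f {..Suc n} = finprod G f {..n}"
    using fg[of "{..n}"] finprod_Suc[OF fg(1), of n] by (simp add: f_def binomial_eq_0)
  also have "finprod G g {..Suc n} = delta (finprod G f {..n}) \<otimes> z"
    using z finprod_Suc2[OF fg(2), of n] delta_finprod_pow[OF z, where n = n and c = "\<lambda>j. n choose Suc j"]
    by (simp add: f_def[abs_def] g_def)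
  also have "delta (finprod G f {..n}) \<otimes> z \<otimes> finprod G f {..n} = z \<otimes> h (finprod G f {..n})"
    using z fg[of "{..n}"] by (simp add: h_eq_mult_delta m_ac)
  finally show ?case
    using Suc by (simp add: f_def[abs_def])
qed

end

lemma (in group) card_subgroup_prime_power:
  fixes p :: nat
  assumes "Factorial_Ring.prime p" "order G = p ^ N" "subgroup H G"
  obtains e where "card H = p ^ e"
proof -
  have "card H dvd p ^ N"
    using lagrange[OF assms(3)] assms(2) by (metis dvd_triv_right)
  then show ?thesis
    using that divides_primepow_nat[OF assms(1)] by blast
qed

definition funpow_kernel :: "('a, 'b) monoid_scheme \<Rightarrow> ('a \<Rightarrow> 'a) \<Rightarrow> 'a set \<Rightarrow> nat \<Rightarrow> 'a set" where
  "funpow_kernel G T V i = {x \<in> V. (T ^^ i) x = \<one>\<^bsub>G\<^esub>}"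

context group
begin

lemma subgroup_funpow_kernel:
  assumes T: "T \<in> hom G G" and V: "subgroup V G"
  shows "subgroup (funpow_kernel G T V i) G"
proof -
  interpret group_hom G G "T ^^ i"
    using funpow_hom[OF T] by (simp add: group_hom_def group_hom_axioms_def is_group)
  have "funpow_kernel G T V i = V \<inter> kernel G G (T ^^ i)"
    using V by (auto simp: funpow_kernel_def kernel_def dest: subgroup.mem_carrier)
  then show ?thesis
    using V subgroup_kernel subgroups_Inter_pair by simp
qed

lemma funpow_kernel_mono:
  assumes T: "T \<in> hom G G" and "i \<le> j"
  shows "funpow_kernel G T V i \<subseteq> funpow_kernel G T V j"
proof
  fix y assume "y \<in> funpow_kernel G T V i"
  moreover have "(T ^^ j) y = (T ^^ (j - i)) ((T ^^ i) y)"
    using assms(2) by (metis comp_apply funpow_add le_add_diff_inverse2)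
  moreover have "(T ^^ n) \<one> = \<one>" for n
    using funpow_hom[OF T] by (simp add: group_hom_def group_hom_axioms_def is_group group_hom.hom_one)
  ultimately show "y \<in> funpow_kernel G T V j"
    by (simp add: funpow_kernel_def)
qed

lemma funpow_kernel_stable:
  assumes T: "T \<in> hom G G" "\<And>x. x \<in> V \<Longrightarrow> T x \<in> V"
    and eq: "funpow_kernel G T V (Suc i) = funpow_kernel G T V i" and "i \<le> j"
  shows "funpow_kernel G T V j = funpow_kernel G T V i"
  using \<open>i \<le> j\<close>
proof (induction j rule: dec_induct)
  case (step j)
  have "funpow_kernel G T V (Suc j) \<subseteq> funpow_kernel G T V j"
  proof
    fix y assume y: "y \<in> funpow_kernel G T V (Suc j)"
    then have "T y \<in> funpow_kernel G T V j"
      using T(2) by (simp add: funpow_kernel_def funpow_swap1)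
    then have "T y \<in> funpow_kernel G T V i"
      using step.IH by simp
    then have "y \<in> funpow_kernel G T V (Suc i)"
      using y by (simp add: funpow_kernel_def funpow_swap1)
    then show "y \<in> funpow_kernel G T V j"
      using step.IH eq by simp
  qed
  then show ?case
    using funpow_kernel_mono[OF T(1), of j "Suc j" V] step.IH by auto
qed simp

text \<open>The kernels of the powers of \<open>T\<close> grow strictly until they exhaust \<open>V\<close>, and their orders are
  powers of \<open>p\<close>.\<close>

lemma card_funpow_kernel_ge:
  fixes p :: nat
  assumes p: "Factorial_Ring.prime p" and order: "order G = p ^ N"
    and T: "T \<in> hom G G" and V: "subgroup V G" "\<And>x. x \<in> V \<Longrightarrow> T x \<in> V"
    and nil: "\<And>x. x \<in> V \<Longrightarrow> (T ^^ q) x = \<one>"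
  shows "funpow_kernel G T V i = V \<or> p ^ i \<le> card (funpow_kernel G T V i)"
proof (induction i)
  case 0
  have "funpow_kernel G T V 0 = {\<one>}"
    using V(1) by (auto simp: funpow_kernel_def subgroup.one_closed)
  then show ?case
    by simp
next
  case (Suc i)
  let ?K = "funpow_kernel G T V"
  have p1: "1 < p"
    using p prime_gt_1_nat by blast
  have sub: "?K j \<subseteq> V" for j
    by (auto simp: funpow_kernel_def)
  have "finite (carrier G)"
    using order p1 by (simp add: order_def card_ge_0_finite)
  then have fin: "finite V"
    using subgroup.subset[OF V(1)] by (rule finite_subset[rotated])
  show ?case
  proof (cases "?K i = V")
    case True
    then show ?thesis
      using sub[of "Suc i"] funpow_kernel_mono[OF T, of i "Suc i" V] by simp
  next
    case False
    have "?K i \<noteq> ?K (Suc i)"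
    proof
      assume "?K i = ?K (Suc i)"
      then have "?K (max i q) = ?K i"
        using funpow_kernel_stable[OF T V(2), of i "max i q"] by simp
      moreover have "V \<subseteq> ?K q"
        using nil by (auto simp: funpow_kernel_def)
      ultimately have "V \<subseteq> ?K i"
        using funpow_kernel_mono[OF T, of q "max i q" V] by simp
      then show False
        using subset_antisym[OF sub[of i]] False by blast
    qed
    moreover have "finite (?K (Suc i))"
      using fin sub[of "Suc i"] by (rule finite_subset[rotated])
    ultimately have "card (?K i) < card (?K (Suc i))"
      using funpow_kernel_mono[OF T, of i "Suc i" V] by (intro psubset_card_mono) auto
    moreover obtain a b where ab: "card (?K i) = p ^ a" "card (?K (Suc i)) = p ^ b"
      using card_subgroup_prime_power[OF p order subgroup_funpow_kernel[OF T V(1)]] by metis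
    ultimately have "a < b"
      using p1 by simp
    moreover have "i \<le> a"
      using Suc.IH False ab(1) p1 by simp
    ultimately have "p ^ Suc i \<le> p ^ b"
      using p1 by (simp only: power_increasing_iff)
    then show ?thesis
      using ab(2) by simp
  qed
qed

lemma nilpotent_hom_index_le:
  fixes p :: nat
  assumes p: "Factorial_Ring.prime p" and order: "order G = p ^ N"
    and T: "T \<in> hom G G" and V: "subgroup V G" "\<And>x. x \<in> V \<Longrightarrow> T x \<in> V"
    and nil: "\<And>x. x \<in> V \<Longrightarrow> (T ^^ q) x = \<one>" and card_V: "card V \<le> p ^ k"
    and x: "x \<in> V"
  shows "(T ^^ k) x = \<one>"
proof -
  have "finite (carrier G)"
    using order prime_gt_0_nat[OF p] by (simp add: order_def card_ge_0_finite)
  then have "finite V"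
    using subgroup.subset[OF V(1)] by (rule finite_subset[rotated])
  moreover have "funpow_kernel G T V k \<subseteq> V"
    by (auto simp: funpow_kernel_def)
  ultimately have "funpow_kernel G T V k = V"
    using card_funpow_kernel_ge[OF p order T V nil, of k] card_V by (metis card_seteq le_trans)
  then show ?thesis
    using x by (auto simp: funpow_kernel_def)
qed

end

lemma prime_dvd_choose_prime_power:
  fixes p :: nat
  assumes p: "Factorial_Ring.prime p" and j: "0 < j" "j < p ^ N"
  shows "p dvd (p ^ N choose j)"
proof (rule ccontr)
  assume not_dvd: "\<not> p dvd (p ^ N choose j)"
  obtain k n where k: "j = Suc k" and n: "p ^ N = Suc n"
    using j by (metis gr0_implies_Suc less_nat_zero_code not0_implies_Suc)
  have "j * (p ^ N choose j) = p ^ N * (n choose k)"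
    using Suc_times_binomial[of k n] k n by simp
  then have "p ^ N dvd j * (p ^ N choose j)"
    by simp
  moreover have "coprime (p ^ N) (p ^ N choose j)"
    using not_dvd p by (simp add: prime_imp_coprime)
  ultimately have "p ^ N dvd j"
    by (simp add: coprime_dvd_mult_left_iff)
  then show False
    using j by (simp add: nat_dvd_not_less)
qed

lemma (in group) torsion_nat_pow_dvd: "x \<in> torsion G n \<Longrightarrow> n dvd k \<Longrightarrow> x [^] k = \<one>"
  by (auto simp: torsion_def nat_pow_pow[symmetric] elim!: dvdE)

locale p_group_endomorphism = abelian_endomorphism +
  fixes p N :: nat
  assumes prime: "Factorial_Ring.prime p"
    and order: "order G = p ^ N"
    and periodic: "\<And>x. x \<in> carrier G \<Longrightarrow> (h ^^ (p ^ N)) x = x"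
    and small_torsion: "card (torsion G p) \<le> p ^ (p - 2)"
begin

lemma two_le_p: "2 \<le> p"
  using prime prime_ge_2_nat by blast

lemma delta_pow_torsion: "x \<in> torsion G p \<Longrightarrow> (delta ^^ j) x \<in> torsion G p"
  by (auto simp: torsion_def simp flip: delta_pow_nat_pow)

lemma delta_pow_p_power_torsion:
  assumes x: "x \<in> torsion G p"
  shows "(delta ^^ (p ^ N)) x = \<one>"
proof -
  have xG: "x \<in> carrier G"
    using x by (simp add: torsion_def)
  define f where "f j = (delta ^^ j) x [^] (p ^ N choose j)" for j
  have f: "f \<in> A \<rightarrow> carrier G" for A
    using xG by (simp add: f_def)
  have middle: "f j = \<one>" if "0 < j" "j < p ^ N" for j
    using torsion_nat_pow_dvd[OF delta_pow_torsion[OF x]] prime_dvd_choose_prime_power[OF prime that]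
    by (simp add: f_def)
  obtain m where m: "p ^ N = Suc m"
    using prime by (metis gr0_implies_Suc prime_gt_0_nat zero_less_power)
  have "(h ^^ (p ^ N)) x = f (Suc m) \<otimes> (f 0 \<otimes> (\<Otimes>j\<in>{Suc 0..m}. f j))"
    using funpow_binomial[OF xG, of "p ^ N"] finprod_Suc[OF f, of m] finprod_0'[OF f, of m]
    by (simp add: m f_def[abs_def])
  also have "(\<Otimes>j\<in>{Suc 0..m}. f j) = \<one>"
    using middle m by (intro finprod_one_eqI) simp
  finally have "x = (delta ^^ (p ^ N)) x \<otimes> x"
    using periodic[OF xG] xG m by (simp add: f_def)
  then show ?thesis
    using xG by simp
qed

lemma delta_pow_p_minus_two_torsion:
  assumes "x \<in> torsion G p"
  shows "(delta ^^ (p - 2)) x = \<one>"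
  using nilpotent_hom_index_le[OF prime order delta_hom subgroup_torsion _ delta_pow_p_power_torsion
      small_torsion assms] delta_pow_torsion[of _ 1]
  by simp

lemma orbit_prod_p_torsion:
  assumes z: "z \<in> torsion G p"
  shows "orbit_prod p z = \<one>"
proof -
  have zG: "z \<in> carrier G"
    using z by (simp add: torsion_def)
  have "(delta ^^ j) z [^] (p choose Suc j) = \<one>" for j
  proof (cases "Suc j < p")
    case True
    then show ?thesis
      using torsion_nat_pow_dvd[OF delta_pow_torsion[OF z]] dvd_choose_prime[OF True _ _ prime]
      by simp
  next
    case False
    show ?thesis
    proof (cases "j = p - 1")
      case True
      then have "j = Suc (p - 2)"
        using two_le_p by simp
      then show ?thesis
        using delta_pow_p_minus_two_torsion[OF z] delta_pow_one[of 1] by simp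
    next
      case False
      then have "p < Suc j"
        using \<open>\<not> Suc j < p\<close> by simp
      then show ?thesis
        by (simp add: binomial_eq_0)
    qed
  qed
  then show ?thesis
    using orbit_prod_binomial[OF zG] by (simp add: finprod_one_eqI)
qed

lemma delta_pow_orbit_prod_term:
  assumes w: "w \<in> carrier G" and e: "(delta ^^ Suc e) (w [^] p) = \<one>"
  shows "(delta ^^ e) ((delta ^^ j) w [^] (p choose Suc j))
    = (if 0 = j then (delta ^^ e) (w [^] p) else \<one>)"
proof (cases j)
  case 0
  then show ?thesis
    using w by (simp add: delta_pow_nat_pow)
next
  case (Suc i)
  have shifted_torsion: "(delta ^^ (k + Suc e)) w \<in> torsion G p" for k
  proof -
    have "(delta ^^ (k + Suc e)) w [^] p = (delta ^^ (k + Suc e)) (w [^] p)"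
      using w by (simp only: delta_pow_nat_pow)
    also have "\<dots> = (delta ^^ k) ((delta ^^ Suc e) (w [^] p))"
      by (simp only: funpow_add comp_apply)
    finally show ?thesis
      using w e by (simp add: torsion_def)
  qed
  have "i + Suc e = e + j"
    using Suc by simp
  then have "(delta ^^ e) ((delta ^^ j) w) = (delta ^^ (i + Suc e)) w"
    by (simp only: funpow_add comp_apply)
  moreover consider "Suc j < p" | "Suc j = p" | "p < Suc j"
    by linarith
  then have "(delta ^^ (i + Suc e)) w [^] (p choose Suc j) = \<one>"
  proof cases
    case 1
    then show ?thesis
      using torsion_nat_pow_dvd[OF shifted_torsion] dvd_choose_prime[OF 1 _ _ prime] by simp
  next
    case 2
    then have "i = p - 2"
      using Suc by simp
    then have "(delta ^^ (i + Suc e)) w = (delta ^^ (p - 2)) ((delta ^^ (0 + Suc e)) w)"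
      by (simp only: funpow_add comp_apply add_0)
    then show ?thesis
      using delta_pow_p_minus_two_torsion[OF shifted_torsion[of 0]] by simp
  next
    case 3
    then show ?thesis
      by (simp add: binomial_eq_0)
  qed
  ultimately show ?thesis
    using Suc w by (simp add: delta_pow_nat_pow)
qed

text \<open>Apply \<open>delta ^^ e\<close>, where \<open>Suc e\<close> is the nilpotency index of \<open>delta\<close> at \<open>w [^] p\<close>: only the
  first term of the binomial expansion survives.\<close>

lemma orbit_prod_p_ne_one:
  assumes w: "w \<in> carrier G" "w [^] p \<noteq> \<one>" "w [^] (p * p) = \<one>"
  shows "orbit_prod p w \<noteq> \<one>"
proof
  assume orbit: "orbit_prod p w = \<one>"
  have u: "w [^] p \<in> torsion G p"
    using w by (simp add: torsion_def nat_pow_pow)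
  define d where "d = (LEAST d. (delta ^^ d) (w [^] p) = \<one>)"
  have d: "(delta ^^ d) (w [^] p) = \<one>"
    unfolding d_def using delta_pow_p_minus_two_torsion[OF u] by (rule LeastI)
  then obtain e where e: "d = Suc e"
    using w(2) by (metis funpow_0 not0_implies_Suc)
  then have v: "(delta ^^ e) (w [^] p) \<noteq> \<one>"
    using not_less_Least[of e "\<lambda>d. (delta ^^ d) (w [^] p) = \<one>"] by (simp add: d_def)
  have "\<one> = (delta ^^ e) (orbit_prod p w)"
    by (simp add: orbit)
  also have "\<dots> = (\<Otimes>j\<in>{..p}. (delta ^^ e) ((delta ^^ j) w [^] (p choose Suc j)))"
    using w(1) by (simp add: orbit_prod_binomial delta_pow_finprod)
  also have "\<dots> = (\<Otimes>j\<in>{..p}. if 0 = j then (delta ^^ e) (w [^] p) else \<one>)"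
    using delta_pow_orbit_prod_term[OF w(1)] d e by simp
  also have "\<dots> = (delta ^^ e) (w [^] p)"
    using w(1) by (intro finprod_singleton) auto
  finally show False
    using v by simp
qed

lemma orbit_prod_p_eq_one_iff:
  assumes z: "z \<in> carrier G"
  shows "orbit_prod p z = \<one> \<longleftrightarrow> z [^] p = \<one>"
proof
  assume "z [^] p = \<one>"
  then show "orbit_prod p z = \<one>"
    using orbit_prod_p_torsion z by (simp add: torsion_def)
next
  assume orbit: "orbit_prod p z = \<one>"
  show "z [^] p = \<one>"
  proof (rule ccontr)
    assume not_torsion: "z [^] p \<noteq> \<one>"
    define e where "e = (LEAST e. z [^] (p ^ e) = \<one>)"
    have "z [^] (p ^ N) = \<one>"
      using pow_order_eq_1[OF z] by (simp add: order)
    then have e: "z [^] (p ^ e) = \<one>"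
      unfolding e_def by (rule LeastI)
    have "e \<noteq> 0"
      using e z not_torsion by (intro notI) simp
    moreover have "e \<noteq> 1"
      using e not_torsion by (intro notI) simp
    ultimately obtain f where f: "e = Suc (Suc f)"
      by (metis One_nat_def not0_implies_Suc)
    have "z [^] (p ^ Suc f) \<noteq> \<one>"
      using not_less_Least[of "Suc f" "\<lambda>e. z [^] (p ^ e) = \<one>"] f by (simp add: e_def)
    moreover have "z [^] (p ^ Suc f) = (z [^] (p ^ f)) [^] p"
      "z [^] (p ^ Suc (Suc f)) = (z [^] (p ^ f)) [^] (p * p)"
      using z by (simp_all add: nat_pow_pow ac_simps)
    moreover have "orbit_prod p (z [^] (p ^ f)) = \<one>"
      using z orbit by (simp add: orbit_prod_nat_pow)
    ultimately show False
      using orbit_prod_p_ne_one[of "z [^] (p ^ f)"] e f z by simp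
  qed
qed

end

section \<open>Left braces\<close>

locale brace =
  fixes A M :: "'a monoid"
  assumes left_brace: "left_brace A M"
begin

sublocale A: comm_group A
  using left_brace by (simp add: left_brace_def)

sublocale M: group M
  using left_brace by (simp add: left_brace_def)

lemma carrier_M [simp]: "carrier M = carrier A"
  using left_brace by (simp add: left_brace_def)

lemma brace_distrib:
  "\<lbrakk>a \<in> carrier A; b \<in> carrier A; c \<in> carrier A\<rbrakk> \<Longrightarrow>
    (a \<otimes>\<^bsub>M\<^esub> (b \<otimes>\<^bsub>A\<^esub> c)) \<otimes>\<^bsub>A\<^esub> a = (a \<otimes>\<^bsub>M\<^esub> b) \<otimes>\<^bsub>A\<^esub> (a \<otimes>\<^bsub>M\<^esub> c)"
  using left_brace by (simp add: left_brace_def)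

lemma one_M [simp]: "\<one>\<^bsub>M\<^esub> = \<one>\<^bsub>A\<^esub>"
proof -
  have "\<one>\<^bsub>M\<^esub> \<otimes>\<^bsub>A\<^esub> \<one>\<^bsub>M\<^esub> = \<one>\<^bsub>M\<^esub>"
    using brace_distrib[of "\<one>\<^bsub>M\<^esub>" "\<one>\<^bsub>A\<^esub>" "\<one>\<^bsub>A\<^esub>"] M.one_closed by simp
  then show ?thesis
    using M.one_closed by simp
qed

lemma mult_M_closed [simp]: "a \<in> carrier A \<Longrightarrow> b \<in> carrier A \<Longrightarrow> a \<otimes>\<^bsub>M\<^esub> b \<in> carrier A"
  using M.m_closed by simp

lemma nat_pow_M_closed [simp]: "a \<in> carrier A \<Longrightarrow> a [^]\<^bsub>M\<^esub> (n::nat) \<in> carrier A"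
  using M.nat_pow_closed by simp

definition lambda :: "'a \<Rightarrow> 'a \<Rightarrow> 'a" where
  "lambda a b = inv\<^bsub>A\<^esub> a \<otimes>\<^bsub>A\<^esub> (a \<otimes>\<^bsub>M\<^esub> b)"

lemma mult_M_eq_lambda: "a \<in> carrier A \<Longrightarrow> b \<in> carrier A \<Longrightarrow> a \<otimes>\<^bsub>M\<^esub> b = a \<otimes>\<^bsub>A\<^esub> lambda a b"
  by (simp add: lambda_def A.m_assoc[symmetric])

lemma lambda_hom: "a \<in> carrier A \<Longrightarrow> lambda a \<in> hom A A"
proof (rule homI)
  fix b c assume abc: "a \<in> carrier A" "b \<in> carrier A" "c \<in> carrier A"
  then have "a \<otimes>\<^bsub>M\<^esub> (b \<otimes>\<^bsub>A\<^esub> c) = (a \<otimes>\<^bsub>M\<^esub> b) \<otimes>\<^bsub>A\<^esub> (a \<otimes>\<^bsub>M\<^esub> c) \<otimes>\<^bsub>A\<^esub> inv\<^bsub>A\<^esub> a"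
    using brace_distrib[OF abc] by (metis A.inv_solve_right A.m_closed mult_M_closed)
  then show "lambda a (b \<otimes>\<^bsub>A\<^esub> c) = lambda a b \<otimes>\<^bsub>A\<^esub> lambda a c"
    using abc by (simp add: lambda_def A.m_ac)
qed (simp add: lambda_def)

lemma lambda_one: "c \<in> carrier A \<Longrightarrow> lambda \<one>\<^bsub>A\<^esub> c = c"
  using M.l_one[of c] by (simp add: lambda_def)

lemma lambda_lambda:
  assumes "a \<in> carrier A" "b \<in> carrier A" "c \<in> carrier A"
  shows "lambda a (lambda b c) = lambda (a \<otimes>\<^bsub>M\<^esub> b) c"
proof -
  interpret group_hom A A "lambda a"
    using lambda_hom assms(1) by (simp add: group_hom_def group_hom_axioms_def A.is_group)
  have "lambda a (lambda b c) = inv\<^bsub>A\<^esub> (lambda a b) \<otimes>\<^bsub>A\<^esub> lambda a (b \<otimes>\<^bsub>M\<^esub> c)"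
    using assms by (simp add: lambda_def[of b c])
  also have "inv\<^bsub>A\<^esub> (lambda a b) = inv\<^bsub>A\<^esub> (a \<otimes>\<^bsub>M\<^esub> b) \<otimes>\<^bsub>A\<^esub> a"
    using assms by (simp add: lambda_def A.inv_mult A.m_comm)
  also have "lambda a (b \<otimes>\<^bsub>M\<^esub> c) = inv\<^bsub>A\<^esub> a \<otimes>\<^bsub>A\<^esub> ((a \<otimes>\<^bsub>M\<^esub> b) \<otimes>\<^bsub>M\<^esub> c)"
    using assms by (simp add: lambda_def M.m_assoc)
  also have "inv\<^bsub>A\<^esub> (a \<otimes>\<^bsub>M\<^esub> b) \<otimes>\<^bsub>A\<^esub> a \<otimes>\<^bsub>A\<^esub> (inv\<^bsub>A\<^esub> a \<otimes>\<^bsub>A\<^esub> ((a \<otimes>\<^bsub>M\<^esub> b) \<otimes>\<^bsub>M\<^esub> c))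
      = lambda (a \<otimes>\<^bsub>M\<^esub> b) c"
    using assms A.m_assoc[of a "inv\<^bsub>A\<^esub> a" "(a \<otimes>\<^bsub>M\<^esub> b) \<otimes>\<^bsub>M\<^esub> c"]
    by (simp add: lambda_def A.m_assoc)
  finally show ?thesis .
qed

lemma funpow_lambda: "a \<in> carrier A \<Longrightarrow> c \<in> carrier A \<Longrightarrow> (lambda a ^^ n) c = lambda (a [^]\<^bsub>M\<^esub> n) c"
  by (induct n) (simp_all add: lambda_one lambda_lambda M.nat_pow_Suc2[symmetric])

lemma abelian_endomorphism_lambda: "a \<in> carrier A \<Longrightarrow> abelian_endomorphism A (lambda a)"
  by (simp add: abelian_endomorphism_def abelian_endomorphism_axioms_def A.comm_group_axioms lambda_hom)

lemma nat_pow_M_eq_orbit_prod: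
  assumes a: "a \<in> carrier A"
  shows "a [^]\<^bsub>M\<^esub> n = abelian_endomorphism.orbit_prod A (lambda a) n a"
proof -
  interpret abelian_endomorphism A "lambda a"
    using abelian_endomorphism_lambda a .
  show ?thesis
  proof (induction n)
    case (Suc n)
    have "a [^]\<^bsub>M\<^esub> Suc n = a \<otimes>\<^bsub>M\<^esub> a [^]\<^bsub>M\<^esub> n"
      using a M.nat_pow_Suc2[of a n] by simp
    then show ?case
      using Suc a by (simp add: mult_M_eq_lambda)
  qed simp
qed

lemma p_group_endomorphism_lambda:
  fixes p :: nat
  assumes "Factorial_Ring.prime p" "order A = p ^ N" "card (torsion A p) \<le> p ^ (p - 2)"
    and a: "a \<in> carrier A"
  shows "p_group_endomorphism A (lambda a) p N"
proof -
  have "a [^]\<^bsub>M\<^esub> (p ^ N) = \<one>\<^bsub>A\<^esub>"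
    using M.pow_order_eq_1[of a] a assms(2) by (simp add: order_def)
  then have "(lambda a ^^ (p ^ N)) x = x" if "x \<in> carrier A" for x
    using that a by (simp add: funpow_lambda lambda_one)
  then show ?thesis
    using assms abelian_endomorphism_lambda[OF a]
    by (simp add: p_group_endomorphism_def p_group_endomorphism_axioms_def)
qed

theorem ord_M_eq_ord_A:
  fixes p :: nat
  assumes p: "Factorial_Ring.prime p" and order: "order A = p ^ N"
    and small_torsion: "card (torsion A p) \<le> p ^ (p - 2)"
    and x: "x \<in> carrier A"
  shows "M.ord x = A.ord x"
proof -
  have pow_iff: "y [^]\<^bsub>M\<^esub> (p ^ k) = \<one>\<^bsub>A\<^esub> \<longleftrightarrow> y [^]\<^bsub>A\<^esub> (p ^ k) = \<one>\<^bsub>A\<^esub>"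
    if "y \<in> carrier A" for y k
    using that
  proof (induction k arbitrary: y)
    case 0
    then show ?case
      by simp
  next
    case (Suc k)
    interpret p_group_endomorphism A "lambda y" p N
      using p_group_endomorphism_lambda[OF p order small_torsion Suc.prems] .
    have "y [^]\<^bsub>M\<^esub> (p ^ Suc k) = (y [^]\<^bsub>M\<^esub> p) [^]\<^bsub>M\<^esub> (p ^ k)"
      using Suc.prems by (simp add: M.nat_pow_pow mult.commute)
    then have "y [^]\<^bsub>M\<^esub> (p ^ Suc k) = \<one>\<^bsub>A\<^esub> \<longleftrightarrow> orbit_prod p y [^]\<^bsub>A\<^esub> (p ^ k) = \<one>\<^bsub>A\<^esub>"
      using Suc.IH[of "y [^]\<^bsub>M\<^esub> p"] Suc.prems by (simp add: nat_pow_M_eq_orbit_prod)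
    also have "\<dots> \<longleftrightarrow> (y [^]\<^bsub>A\<^esub> (p ^ k)) [^]\<^bsub>A\<^esub> p = \<one>\<^bsub>A\<^esub>"
      using Suc.prems by (simp add: orbit_prod_nat_pow flip: orbit_prod_p_eq_one_iff)
    finally show ?case
      using Suc.prems by (simp add: A.nat_pow_pow mult.commute)
  qed
  obtain i where i: "M.ord x = p ^ i"
    using M.ord_dvd_group_order[of x] x order divides_primepow_nat[OF p] by (auto simp: order_def)
  obtain j where j: "A.ord x = p ^ j"
    using A.ord_dvd_group_order[OF x] order divides_primepow_nat[OF p] by auto
  have "x [^]\<^bsub>A\<^esub> (M.ord x) = \<one>\<^bsub>A\<^esub>"
    using pow_iff[OF x, of i] M.pow_ord_eq_1[of x] x i by simp
  moreover have "x [^]\<^bsub>M\<^esub> (A.ord x) = \<one>\<^bsub>M\<^esub>"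
    using pow_iff[OF x, of j] A.pow_ord_eq_1[OF x] j by simp
  ultimately have "A.ord x dvd M.ord x" "M.ord x dvd A.ord x"
    using x by (simp_all add: A.pow_eq_id M.pow_eq_id del: one_M)
  then show ?thesis
    by (rule dvd_antisym[rotated])
qed

lemma torsion_M_eq_torsion_A:
  assumes "\<And>x. x \<in> carrier A \<Longrightarrow> M.ord x = A.ord x"
  shows "torsion M k = torsion A k"
  using assms M.pow_eq_id A.pow_eq_id by (auto simp: torsion_def simp del: one_M)

corollary iso_if_comm_group_M:
  fixes p :: nat
  assumes "Factorial_Ring.prime p" "order A = p ^ N" "card (torsion A p) \<le> p ^ (p - 2)"
    and "comm_group M"
  shows "M \<cong> A"
  using iso_if_card_torsion_eq[OF assms(4) A.comm_group_axioms assms(1)] ord_M_eq_ord_A[OF assms(1-3)]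
    assms(2) by (simp add: order_def torsion_M_eq_torsion_A)

end

theorem theorem2p5:
  fixes A M :: "'a monoid" and p :: nat
  assumes brace: "left_brace A M"
    and fin: "finite (carrier A)"
    and p: "Factorial_Ring.prime p"
  shows "(\<forall>(m::nat) (\<alpha>::nat \<Rightarrow> nat).
            0 < m \<and> m + 2 \<le> p \<and> (\<forall>i<m. 1 \<le> \<alpha> i) \<and>
            (\<forall>i j. i \<le> j \<and> j < m \<longrightarrow> \<alpha> i \<le> \<alpha> j) \<and>
            A \<cong> product_group {..<m} (\<lambda>i. integer_mod_group (p ^ \<alpha> i))
          \<longrightarrow> (\<forall>x\<in>carrier A. group.ord M x = group.ord A x) \<and>
              (comm_group M \<longrightarrow> M \<cong> A))
       \<and> (\<forall>n::nat. card (carrier A) = p ^ n \<and> n + 2 \<le> p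
          \<longrightarrow> (\<forall>x\<in>carrier A. group.ord M x = group.ord A x))"
proof -
  interpret brace A M
    using brace by (rule brace.intro)
  have p0: "0 < p"
    using p prime_gt_0_nat by blast
  have conclusions: "(\<forall>x\<in>carrier A. M.ord x = A.ord x) \<and> (comm_group M \<longrightarrow> M \<cong> A)"
    if "order A = p ^ N" "card (torsion A p) \<le> p ^ k" "k + 2 \<le> p" for N k
  proof -
    have "card (torsion A p) \<le> p ^ (p - 2)"
      using that(2,3) p0 order_trans power_increasing by fastforce
    then show ?thesis
      using ord_M_eq_ord_A iso_if_comm_group_M p that(1) by blast
  qed
  have "(\<forall>x\<in>carrier A. M.ord x = A.ord x) \<and> (comm_group M \<longrightarrow> M \<cong> A)"
    if "m + 2 \<le> p" "\<forall>i<m. 1 \<le> \<alpha> i"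
      and iso: "A \<cong> product_group {..<m} (\<lambda>i. integer_mod_group (p ^ \<alpha> i))" for m \<alpha>
    using conclusions[of "\<Sum>i<m. \<alpha> i" m] that(1,2) p0 card_torsion_is_iso[OF iso]
      card_torsion_product_integer_mod_group[of "{..<m}" p \<alpha>]
      iso_same_card[OF iso] order_product_integer_mod_group[of "{..<m}" p \<alpha>]
    by (simp add: order_def)
  moreover have "\<forall>x\<in>carrier A. M.ord x = A.ord x" if "card (carrier A) = p ^ n" "n + 2 \<le> p" for n
    using conclusions[of n n] card_mono[OF fin torsion_subset] that by (simp add: order_def)
  ultimately show ?thesis
    by blast
qed

end
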